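(* If $\lambda\equiv 2\pmod 4$, $v=\frac{2nk}{\lambda}+t\equiv 2\pmod 4$ and $t$ is odd, then a ${}^\lambda\mathrm{H}_t(m,n;s,k)$ does not exist.
   Context: Let $m,n,s,k,\lambda,t$ be positive integers with $t$ dividing $\frac{2nk}{\lambda}$, let $v=\frac{2nk}{\lambda}+t$ and let $J$ be the subgroup of $\mathbb{Z}_v$ of order $t$. A $\lambda$-fold Heffter array ${}^\lambda\mathrm{H}_t(m,n;s,k)$ is an $m\times n$ partially filled array with entries in $\mathbb{Z}_v$ such that: (a) each row has exactly $s$ and each column exactly $k$ filled cells; (b) the multiset $\{\pm x: x$ an entry of a filled cell$\}$ (counted over all filled cells) contains each element of $\mathbb{Z}_v\setminus J$ exactly $\lambda$ times and no element of $J$; (c) every row and every column sums to $0$ in $\mathbb{Z}_v$. *)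

theory Defs
  imports Main
begin

text \<open>Elements of Z_v are represented by their canonical integer representatives in
  {0..<v}. A partially filled m x n array is a function A :: nat => nat => int option,
  where A i j = None means the cell (i,j) is empty (rows/columns indexed from 0).\<close>

definition hv :: "nat \<Rightarrow> nat \<Rightarrow> nat \<Rightarrow> nat \<Rightarrow> int" where
  "hv lam t n k = int (2 * n * k div lam + t)"

text \<open>The subgroup J of Z_v of order t (t divides v): the multiples of v div t.\<close>
definition hJ :: "int \<Rightarrow> nat \<Rightarrow> int set" where
  "hJ v t = {y. 0 \<le> y \<and> y < v \<and> (v div int t) dvd y}"

definition filled_cells :: "nat \<Rightarrow> nat \<Rightarrow> (nat \<Rightarrow> nat \<Rightarrow> int option) \<Rightarrow> (nat \<times> nat) set" where
  "filled_cells m n A = {(i, j). i < m \<and> j < n \<and> A i j \<noteq> None}"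

definition heffter_array ::
  "nat \<Rightarrow> nat \<Rightarrow> nat \<Rightarrow> nat \<Rightarrow> nat \<Rightarrow> nat \<Rightarrow> (nat \<Rightarrow> nat \<Rightarrow> int option) \<Rightarrow> bool" where
  "heffter_array lam t m n s k A \<longleftrightarrow>
    (let v = hv lam t n k; C = filled_cells m n A in
      (\<forall>i j. A i j \<noteq> None \<longrightarrow> i < m \<and> j < n) \<and>
      (\<forall>i j x. A i j = Some x \<longrightarrow> 0 \<le> x \<and> x < v) \<and>
      (\<forall>i<m. card {j. j < n \<and> A i j \<noteq> None} = s) \<and>
      (\<forall>j<n. card {i. i < m \<and> A i j \<noteq> None} = k) \<and>
      (\<forall>y. 0 \<le> y \<and> y < v \<longrightarrow>
         card {c \<in> C. the (A (fst c) (snd c)) mod v = y}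
         + card {c \<in> C. (- the (A (fst c) (snd c))) mod v = y}
         = (if y \<in> hJ v t then 0 else lam)) \<and>
      (\<forall>i<m. (\<Sum>j\<in>{j. j < n \<and> A i j \<noteq> None}. the (A i j)) mod v = 0) \<and>
      (\<forall>j<n. (\<Sum>i\<in>{i. i < m \<and> A i j \<noteq> None}. the (A i j)) mod v = 0))"

end

theory Submission
  imports Defs
begin

text \<open>Count the odd entries of a Heffter array in two ways. Since \<open>t\<close> is odd, the subgroup
  \<open>J\<close> consists of multiples of the even number \<open>v / t\<close>, so each of the \<open>v/2\<close> odd residues
  occurs exactly \<open>\<lambda>\<close> times among the \<open>\<pm>x\<close>; as \<open>v\<close> is even, \<open>x\<close> and \<open>-x\<close> have the same
  parity, so there are \<open>(\<lambda>/2)(v/2)\<close> odd entries, an odd number when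
  \<open>\<lambda> \<equiv> v \<equiv> 2 (mod 4)\<close>. On the other hand every row sums to a multiple of the even
  number \<open>v\<close>, so the sum of all entries is even and the number of odd entries is even.\<close>

lemma sum_card_fibers:
  assumes "finite C" "finite B"
  shows "(\<Sum>y\<in>B. card {c\<in>C. g c = y}) = card {c\<in>C. g c \<in> B}"
proof -
  have "card (\<Union>y\<in>B. {c\<in>C. g c = y}) = (\<Sum>y\<in>B. card {c\<in>C. g c = y})"
    by (rule card_UN_disjoint) (use assms in auto)
  moreover have "{c\<in>C. g c \<in> B} = (\<Union>y\<in>B. {c\<in>C. g c = y})" by auto
  ultimately show ?thesis by simp
qed

lemma card_odd_below_double:
  fixes w :: int
  assumes "0 \<le> w"
  shows "card {y. 0 \<le> y \<and> y < 2 * w \<and> odd y} = nat w"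
proof -
  have "{y. 0 \<le> y \<and> y < 2 * w \<and> odd y} = (\<lambda>z. 2 * z + 1) ` {0..<w}"
    by (auto elim!: oddE)
  moreover have "inj_on (\<lambda>z::int. 2 * z + 1) {0..<w}" by (auto simp: inj_on_def)
  ultimately show ?thesis by (simp add: card_image)
qed

lemma hJ_even:
  assumes "even (v div int t)" "y \<in> hJ v t"
  shows "even y"
  using assms unfolding hJ_def by (auto intro: dvd_trans)

lemma finite_filled_cells: "finite (filled_cells m n A)"
  by (rule finite_subset[of _ "{..<m} \<times> {..<n}"]) (auto simp: filled_cells_def)

lemma heffter_array_dvd_sum_entries:
  assumes "heffter_array lam t m n s k A"
  shows "hv lam t n k dvd (\<Sum>c\<in>filled_cells m n A. the (A (fst c) (snd c)))"
proof -
  let ?row = "\<lambda>i. {j. j < n \<and> A i j \<noteq> None}"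
  have "filled_cells m n A = Sigma {..<m} ?row"
    by (auto simp: filled_cells_def)
  then have "(\<Sum>c\<in>filled_cells m n A. the (A (fst c) (snd c)))
      = (\<Sum>i<m. \<Sum>j\<in>?row i. the (A i j))"
    by (simp add: sum.Sigma case_prod_beta)
  moreover have "hv lam t n k dvd (\<Sum>j\<in>?row i. the (A i j))" if "i < m" for i
    using assms that by (simp add: heffter_array_def Let_def mod_eq_0_iff_dvd)
  ultimately show ?thesis by (auto intro: dvd_sum)
qed

lemma heffter_array_card_odd_entries:
  assumes H: "heffter_array lam t m n s k A"
    and v_even: "even (hv lam t n k)"
    and J_even: "\<And>y. y \<in> hJ (hv lam t n k) t \<Longrightarrow> even y"
  shows "2 * card {c\<in>filled_cells m n A. odd (the (A (fst c) (snd c)))}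
    = lam * nat (hv lam t n k div 2)"
proof -
  define v where "v = hv lam t n k"
  define C where "C = filled_cells m n A"
  define x where "x = (\<lambda>c. the (A (fst c) (snd c)))"
  define Od where "Od = {y. 0 \<le> y \<and> y < v \<and> odd y}"
  note H' = H[unfolded heffter_array_def Let_def, folded v_def C_def]
  have "v \<ge> 0" by (simp add: v_def hv_def)
  have range: "0 \<le> x c \<and> x c < v" if "c \<in> C" for c
    using H' that unfolding C_def filled_cells_def x_def by auto
  have fin: "finite C" "finite Od"
    by (simp add: C_def finite_filled_cells)
      (rule finite_subset[of _ "{0..<v}"], auto simp: Od_def)
  have parity: "odd (a mod v) \<longleftrightarrow> odd a" for a
    using v_even dvd_mod_iff unfolding v_def by blast
  have odd_fibers: "(\<Sum>y\<in>Od. card {c\<in>C. g c mod v = y}) = card {c\<in>C. odd (x c)}"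
    if "\<And>c. odd (g c) \<longleftrightarrow> odd (x c)" for g
  proof -
    have "(\<Sum>y\<in>Od. card {c\<in>C. g c mod v = y}) = card {c\<in>C. g c mod v \<in> Od}"
      by (rule sum_card_fibers[OF fin])
    also have "\<dots> = card {c\<in>C. odd (x c)}"
      using range that by (intro arg_cong[where f = card]) (fastforce simp: Od_def parity)
    finally show ?thesis .
  qed
  have "(\<Sum>y\<in>Od. card {c\<in>C. x c mod v = y} + card {c\<in>C. (- x c) mod v = y})
      = lam * card Od"
  proof -
    have "card {c\<in>C. x c mod v = y} + card {c\<in>C. (- x c) mod v = y} = lam" if "y \<in> Od" for y
      using that H' J_even[folded v_def] unfolding Od_def x_def by auto
    then show ?thesis by simp
  qed
  moreover note odd_fibers[of x] odd_fibers[of "\<lambda>c. - x c"]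
  moreover have "card Od = nat (v div 2)"
    using card_odd_below_double[of "v div 2"] \<open>v \<ge> 0\<close> v_even
    unfolding Od_def v_def by simp
  ultimately show ?thesis
    unfolding v_def C_def x_def by (simp add: sum.distrib)
qed

theorem proposition4p2:
  fixes lam t m n s k :: nat
  assumes "0 < m" "0 < n" "0 < s" "0 < k" "0 < lam" "0 < t"
    and "lam dvd 2 * n * k" and "t dvd 2 * n * k div lam"
    and "lam mod 4 = 2"
    and "(2 * n * k div lam + t) mod 4 = 2"
    and "odd t"
  shows "\<not> (\<exists>A. heffter_array lam t m n s k A)"
proof
  assume "\<exists>A. heffter_array lam t m n s k A"
  then obtain A where H: "heffter_array lam t m n s k A" ..
  define v where "v = hv lam t n k"
  define N where "N = card {c\<in>filled_cells m n A. odd (the (A (fst c) (snd c)))}"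
  have "v mod 4 = 2"
    unfolding v_def hv_def using assms(10) by (metis of_nat_mod of_nat_numeral)
  moreover have "v \<ge> 0" by (simp add: v_def hv_def)
  ultimately have "even v" "odd (v div 2)" "v > 0" by presburger+
  have "int t dvd v"
    unfolding v_def hv_def using assms(8) by (metis dvd_add_left_iff dvd_refl int_dvd_int_iff of_nat_add)
  then obtain q where "v = int t * q" ..
  with \<open>even v\<close> \<open>odd t\<close> \<open>0 < t\<close> have "even (v div int t)" by simp
  then have "2 * N = lam * nat (v div 2)"
    using heffter_array_card_odd_entries[OF H] hJ_even \<open>even v\<close> unfolding N_def v_def by blast
  moreover obtain l where "lam = 2 * l" "odd l"
    using assms(9) by (intro that[of "lam div 2"]) presburger+
  ultimately have "odd N"
    using \<open>odd (v div 2)\<close> \<open>v > 0\<close> by (simp add: even_nat_iff)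
  moreover have "even N"
    using heffter_array_dvd_sum_entries[OF H] \<open>even v\<close> even_sum_iff[OF finite_filled_cells]
    unfolding N_def v_def by (metis dvd_trans)
  ultimately show False by simp
qed

end
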